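(* For any geodetic simple connected graph $G$ with at least one edge, $src(G)=\chi'(G)$. Moreover, an edge coloring $f$ of $G$ strongly rainbow connects $G$ if and only if $f$ is a proper coloring of the vertices of $H(G)$.
   Context: A graph is geodetic if every pair of distinct vertices is joined by a unique shortest path. An edge coloring of $G$ is any function $f:E(G)\to\{1,\dots,k\}$, $k\in\mathbb{N}$ (adjacent edges may share a color). A path is rainbow with respect to $f$ if its edges receive pairwise distinct colors. $f$ strongly rainbow connects $G$ if for every pair of distinct vertices $u,v$ there is a shortest $(u,v)$-path that is rainbow; $src(G)$ is the minimum $k$ for which such an $f$ exists. For distinct $u_1,u_2\in V(G)$, an edge $e$ separates $u_1,u_2$ if $e$ lies on every shortest $(u_1,u_2)$-path. The auxiliary graph $H(G)$ has vertex set $E(G)$, and distinct $e_1,e_2$ are adjacent in $H(G)$ iff some pair of distinct vertices of $G$ is separated by both $e_1$ and $e_2$. $\chi'(G)=\chi(H(G))$. An edge coloring of $G$ is regarded as a coloring of the vertices of $H(G)$ since $V(H(G))=E(G)$. *)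

theory Defs
  imports Main
begin

definition simple_graph :: "'a set \<Rightarrow> 'a set set \<Rightarrow> bool" where
  "simple_graph V E \<longleftrightarrow> finite V \<and> (\<forall>e\<in>E. e \<subseteq> V \<and> card e = 2)"

definition walk :: "'a set \<Rightarrow> 'a set set \<Rightarrow> 'a list \<Rightarrow> bool" where
  "walk V E p \<longleftrightarrow> p \<noteq> [] \<and> set p \<subseteq> V \<and>
     (\<forall>i. Suc i < length p \<longrightarrow> {p ! i, p ! Suc i} \<in> E)"

definition walk_edges :: "'a list \<Rightarrow> 'a set list" where
  "walk_edges p = map (\<lambda>i. {p ! i, p ! Suc i}) [0..<length p - 1]"

definition walk_betw :: "'a set \<Rightarrow> 'a set set \<Rightarrow> 'a \<Rightarrow> 'a \<Rightarrow> 'a list \<Rightarrow> bool" where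
  "walk_betw V E u v p \<longleftrightarrow> walk V E p \<and> hd p = u \<and> last p = v"

text \<open>A shortest (u,v)-path: a (u,v)-walk of minimum length (such a walk is automatically a path).\<close>
definition shortest_path :: "'a set \<Rightarrow> 'a set set \<Rightarrow> 'a \<Rightarrow> 'a \<Rightarrow> 'a list \<Rightarrow> bool" where
  "shortest_path V E u v p \<longleftrightarrow> walk_betw V E u v p \<and>
     (\<forall>q. walk_betw V E u v q \<longrightarrow> length p \<le> length q)"

definition connected_graph :: "'a set \<Rightarrow> 'a set set \<Rightarrow> bool" where
  "connected_graph V E \<longleftrightarrow> (\<forall>u\<in>V. \<forall>v\<in>V. \<exists>p. walk_betw V E u v p)"

definition geodetic :: "'a set \<Rightarrow> 'a set set \<Rightarrow> bool" where
  "geodetic V E \<longleftrightarrow> (\<forall>u\<in>V. \<forall>v\<in>V. u \<noteq> v \<longrightarrow> (\<exists>!p. shortest_path V E u v p))"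

definition edge_coloring :: "'a set set \<Rightarrow> nat \<Rightarrow> ('a set \<Rightarrow> nat) \<Rightarrow> bool" where
  "edge_coloring E k f \<longleftrightarrow> (\<forall>e\<in>E. f e \<in> {1..k})"

definition rainbow :: "('a set \<Rightarrow> nat) \<Rightarrow> 'a list \<Rightarrow> bool" where
  "rainbow f p \<longleftrightarrow> distinct (map f (walk_edges p))"

definition strongly_rainbow_connects :: "'a set \<Rightarrow> 'a set set \<Rightarrow> ('a set \<Rightarrow> nat) \<Rightarrow> bool" where
  "strongly_rainbow_connects V E f \<longleftrightarrow>
     (\<forall>u\<in>V. \<forall>v\<in>V. u \<noteq> v \<longrightarrow> (\<exists>p. shortest_path V E u v p \<and> rainbow f p))"

definition src :: "'a set \<Rightarrow> 'a set set \<Rightarrow> nat" where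
  "src V E = (LEAST k. \<exists>f. edge_coloring E k f \<and> strongly_rainbow_connects V E f)"

definition separates :: "'a set \<Rightarrow> 'a set set \<Rightarrow> 'a set \<Rightarrow> 'a \<Rightarrow> 'a \<Rightarrow> bool" where
  "separates V E e u1 u2 \<longleftrightarrow> (\<forall>p. shortest_path V E u1 u2 p \<longrightarrow> e \<in> set (walk_edges p))"

definition H_adj :: "'a set \<Rightarrow> 'a set set \<Rightarrow> 'a set \<Rightarrow> 'a set \<Rightarrow> bool" where
  "H_adj V E e1 e2 \<longleftrightarrow> e1 \<in> E \<and> e2 \<in> E \<and> e1 \<noteq> e2 \<and>
     (\<exists>u1\<in>V. \<exists>u2\<in>V. u1 \<noteq> u2 \<and> separates V E e1 u1 u2 \<and> separates V E e2 u1 u2)"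

definition proper_H_coloring :: "'a set \<Rightarrow> 'a set set \<Rightarrow> ('a set \<Rightarrow> nat) \<Rightarrow> bool" where
  "proper_H_coloring V E f \<longleftrightarrow> (\<forall>e1 e2. H_adj V E e1 e2 \<longrightarrow> f e1 \<noteq> f e2)"

definition chi' :: "'a set \<Rightarrow> 'a set set \<Rightarrow> nat" where
  "chi' V E = (LEAST k. \<exists>f. edge_coloring E k f \<and> proper_H_coloring V E f)"

end

theory Submission
  imports Defs
begin

text \<open>A coloring that strongly rainbow connects G must give distinct colors to two edges
  that both separate some pair u, v, since both lie on the rainbow shortest (u,v)-path; this
  holds in every graph. Conversely, in a geodetic graph every edge of the unique shortest
  (u,v)-path separates u and v, so any two of its edges are adjacent in H(G), and a proper
  coloring of H(G) makes that path rainbow (its edges are distinct because shortest walks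
  do not repeat vertices). Hence the two kinds of colorings coincide, and so do the least
  numbers of colors they need.\<close>

lemma walk_singleton [simp]: "walk V E [x] \<longleftrightarrow> x \<in> V"
  by (simp add: walk_def)

lemma walk_Cons_Cons [simp]:
  "walk V E (x # y # p) \<longleftrightarrow> x \<in> V \<and> {x, y} \<in> E \<and> walk V E (y # p)"
  by (auto simp: walk_def nth_Cons less_Suc_eq_0_disj split: nat.splits)

lemma walk_Cons_hd_in: "walk V E (x # p) \<Longrightarrow> x \<in> V"
  by (simp add: walk_def)

text \<open>Not a simp rule: it rewrites its own right-hand side xs @ [y], so it is always
  used with explicit instances.\<close>

lemma walk_append_Cons:
  "walk V E (xs @ y # zs) \<longleftrightarrow> walk V E (xs @ [y]) \<and> walk V E (y # zs)"
proof (induction xs)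
  case Nil
  then show ?case by (auto dest: walk_Cons_hd_in)
next
  case (Cons x xs)
  then show ?case by (cases xs) auto
qed

lemma walk_edges_Nil [simp]: "walk_edges [] = []"
  and walk_edges_singleton [simp]: "walk_edges [x] = []"
  and walk_edges_Cons_Cons [simp]: "walk_edges (x # y # p) = {x, y} # walk_edges (y # p)"
  by (simp_all add: walk_edges_def map_upt_Suc del: upt_Suc)

lemma walk_edges_subset_E: "walk V E p \<Longrightarrow> set (walk_edges p) \<subseteq> E"
  by (induction p rule: induct_list012) auto

lemma walk_edge_subset_vertices: "e \<in> set (walk_edges p) \<Longrightarrow> e \<subseteq> set p"
  by (induction p rule: induct_list012) auto

lemma distinct_walk_edges: "distinct p \<Longrightarrow> distinct (walk_edges p)"
  by (induction p rule: induct_list012) (auto dest: walk_edge_subset_vertices)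

lemma shortest_path_walk: "shortest_path V E u v p \<Longrightarrow> walk V E p"
  by (simp add: shortest_path_def walk_betw_def)

lemma shortest_path_distinct:
  assumes sp: "shortest_path V E u v p"
  shows "distinct p"
proof (rule ccontr)
  assume "\<not> distinct p"
  then obtain xs y ys zs where p: "p = xs @ [y] @ ys @ [y] @ zs"
    using not_distinct_decomp by blast
  have "walk V E (xs @ y # (ys @ y # zs))"
    using shortest_path_walk[OF sp] by (simp add: p)
  then have "walk V E (xs @ [y])" "walk V E ((y # ys) @ y # zs)"
    unfolding walk_append_Cons[of V E xs y "ys @ y # zs"] by simp_all
  then have "walk V E (xs @ y # zs)"
    unfolding walk_append_Cons[of V E "y # ys" y zs] walk_append_Cons[of V E xs y zs] by simp
  moreover have "hd (xs @ y # zs) = hd p" "last (xs @ y # zs) = last p"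
    by (simp_all add: p hd_append)
  ultimately have "walk_betw V E u v (xs @ y # zs)"
    using sp by (simp add: shortest_path_def walk_betw_def)
  then have "length p \<le> length (xs @ y # zs)"
    using sp unfolding shortest_path_def by blast
  then show False by (simp add: p)
qed

lemma rainbow_iff_inj_on:
  "shortest_path V E u v p \<Longrightarrow> rainbow f p \<longleftrightarrow> inj_on f (set (walk_edges p))"
  by (simp add: rainbow_def distinct_map distinct_walk_edges shortest_path_distinct)

lemma geodetic_shortest_path_edge_separates:
  assumes "geodetic V E" "u \<in> V" "v \<in> V" "u \<noteq> v"
    and "shortest_path V E u v p" "e \<in> set (walk_edges p)"
  shows "separates V E e u v"
  using assms unfolding geodetic_def separates_def by metis

lemma strongly_rainbow_connects_imp_proper_H_coloring:
  assumes "strongly_rainbow_connects V E f"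
  shows "proper_H_coloring V E f"
  unfolding proper_H_coloring_def
proof (intro allI impI)
  fix e1 e2
  assume "H_adj V E e1 e2"
  then obtain u v where "e1 \<noteq> e2" "u \<in> V" "v \<in> V" "u \<noteq> v"
    and sep: "separates V E e1 u v" "separates V E e2 u v"
    unfolding H_adj_def by blast
  moreover from this obtain p where p: "shortest_path V E u v p" "rainbow f p"
    using assms unfolding strongly_rainbow_connects_def by blast
  moreover have "e1 \<in> set (walk_edges p)" "e2 \<in> set (walk_edges p)"
    using sep p(1) unfolding separates_def by auto
  ultimately show "f e1 \<noteq> f e2"
    by (metis rainbow_iff_inj_on inj_onD)
qed

lemma geodetic_proper_H_coloring_imp_strongly_rainbow_connects:
  assumes geo: "geodetic V E" and proper: "proper_H_coloring V E f"
  shows "strongly_rainbow_connects V E f"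
  unfolding strongly_rainbow_connects_def
proof (intro ballI impI)
  fix u v
  assume uv: "u \<in> V" "v \<in> V" "u \<noteq> v"
  then obtain p where p: "shortest_path V E u v p"
    using geo unfolding geodetic_def by blast
  have "inj_on f (set (walk_edges p))"
  proof (rule inj_onI, rule ccontr)
    fix e1 e2
    assume e: "e1 \<in> set (walk_edges p)" "e2 \<in> set (walk_edges p)" "f e1 = f e2" "e1 \<noteq> e2"
    have "e1 \<in> E" "e2 \<in> E"
      using e(1,2) walk_edges_subset_E[OF shortest_path_walk[OF p]] by blast+
    moreover have "separates V E e1 u v" "separates V E e2 u v"
      using e(1,2) geodetic_shortest_path_edge_separates[OF geo uv p] by blast+
    ultimately have "H_adj V E e1 e2"
      using e(4) uv unfolding H_adj_def by blast
    with e(3) proper show False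
      unfolding proper_H_coloring_def by blast
  qed
  with p show "\<exists>p. shortest_path V E u v p \<and> rainbow f p"
    using rainbow_iff_inj_on[OF p] by blast
qed

theorem theorem2:
  fixes V :: "'a set" and E :: "'a set set"
  assumes "simple_graph V E" and "connected_graph V E" and "geodetic V E" and "E \<noteq> {}"
  shows "src V E = chi' V E \<and>
    (\<forall>f k. edge_coloring E k f \<longrightarrow>
       (strongly_rainbow_connects V E f \<longleftrightarrow> proper_H_coloring V E f))"
proof -
  have "strongly_rainbow_connects V E f \<longleftrightarrow> proper_H_coloring V E f" for f
    using strongly_rainbow_connects_imp_proper_H_coloring
      geodetic_proper_H_coloring_imp_strongly_rainbow_connects[OF assms(3)] by blast
  then show ?thesis
    by (simp add: src_def chi'_def)
qed

end
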